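(* Let $\lambda$ be a cardinal, let $\langle P,\le\rangle$ and $\langle Q,\le\rangle$ be partially ordered sets and let $\varphi:P\to Q$ be a monotonic function. If $Q$ is $\lambda$-Noetherian and for every $q\in Q$ the fiber $\varphi^{-1}(\{q\})$ (with the induced order) is $\lambda$-Noetherian, then $P$ is $\lambda$-Noetherian.
   Context: A poset is Noetherian if it contains no infinite strictly increasing sequence. For a cardinal $\lambda$, a poset $\langle P,\le\rangle$ is $\lambda$-Noetherian if there is a function $f:P\to\lambda$ such that for every $\xi\in\lambda$ the subposet $f^{-1}(\{\xi\})$ with the restricted order is Noetherian. *)

theory Defs
  imports Main "HOL-Library.FuncSet"
begin

definition noetherian :: "'a set \<Rightarrow> 'a rel \<Rightarrow> bool" where
  "noetherian A r \<longleftrightarrow>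
     \<not> (\<exists>s :: nat \<Rightarrow> 'a. (\<forall>n. s n \<in> A) \<and>
                        (\<forall>n. (s n, s (Suc n)) \<in> r \<and> s n \<noteq> s (Suc n)))"

text \<open>The cardinal lambda is represented by a set L of cardinality lambda
  (e.g. the set of ordinals below lambda); the notion only depends on |L|.\<close>

definition lambda_noetherian :: "'c set \<Rightarrow> 'a set \<Rightarrow> 'a rel \<Rightarrow> bool" where
  "lambda_noetherian L A r \<longleftrightarrow>
     (\<exists>f. f \<in> A \<rightarrow> L \<and> (\<forall>\<xi>\<in>L. noetherian {x \<in> A. f x = \<xi>} r))"

end

theory Submission
  imports Defs "HOL-Library.Infinite_Set"
begin

text \<open>Colour P by pairs: first by the colour of the image in Q, then by the colour inside the
  fibre. Along a strictly increasing sequence of one colour class the images increase weakly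
  inside a Noetherian part of Q, so they are eventually constant; from then on the sequence
  stays in a single fibre and a single colour class there, which is impossible. The colours lie
  in L \<times> L, which has the same size as L when L is infinite; when L is finite, a finite union of
  Noetherian pieces is Noetherian by the pigeonhole principle.\<close>

definition strict_chain :: "'a set \<Rightarrow> 'a rel \<Rightarrow> (nat \<Rightarrow> 'a) \<Rightarrow> bool" where
  "strict_chain A r s \<longleftrightarrow> (\<forall>n. s n \<in> A) \<and> (\<forall>n. (s n, s (Suc n)) \<in> r \<and> s n \<noteq> s (Suc n))"

lemma noetherianI: "(\<And>s. strict_chain A r s \<Longrightarrow> False) \<Longrightarrow> noetherian A r"
  unfolding noetherian_def strict_chain_def by blast

lemma noetherianD: "noetherian A r \<Longrightarrow> strict_chain A r s \<Longrightarrow> False"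
  unfolding noetherian_def strict_chain_def by blast

lemma noetherian_empty [simp]: "noetherian {} r"
  by (rule noetherianI) (simp add: strict_chain_def)

lemma chain_trans_less:
  assumes "trans r" and "\<forall>n. (t n, t (Suc n)) \<in> r" and "m < n"
  shows "(t m, t n) \<in> r"
  using \<open>m < n\<close> by (induction m n rule: less_Suc_induct) (use assms in \<open>auto dest: transD\<close>)

lemma strict_chain_subseq:
  assumes "trans r" and "antisym r"
    and step: "\<forall>n. (t n, t (Suc n)) \<in> r"
    and "strict_mono \<sigma>"
    and strict_step: "\<forall>k. t (\<sigma> k) \<noteq> t (Suc (\<sigma> k))"
    and "\<forall>k. t (\<sigma> k) \<in> A"
  shows "strict_chain A r (t \<circ> \<sigma>)"
proof -
  have "(t (\<sigma> k), t (\<sigma> (Suc k))) \<in> r \<and> t (\<sigma> k) \<noteq> t (\<sigma> (Suc k))" for k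
  proof -
    have less: "\<sigma> k < \<sigma> (Suc k)" using \<open>strict_mono \<sigma>\<close> by (simp add: strict_mono_Suc_iff)
    then have le: "(t (\<sigma> k), t (\<sigma> (Suc k))) \<in> r"
      using chain_trans_less[OF \<open>trans r\<close> step] by blast
    have "t (\<sigma> k) \<noteq> t (\<sigma> (Suc k))"
    proof
      assume eq: "t (\<sigma> k) = t (\<sigma> (Suc k))"
      consider "Suc (\<sigma> k) = \<sigma> (Suc k)" | "Suc (\<sigma> k) < \<sigma> (Suc k)"
        using less by linarith
      then show False
      proof cases
        case 1
        with eq strict_step show False by metis
      next
        case 2
        then have "(t (Suc (\<sigma> k)), t (\<sigma> k)) \<in> r"
          using chain_trans_less[OF \<open>trans r\<close> step] eq by metis
        with step strict_step \<open>antisym r\<close> show False by (metis antisymD)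
      qed
    qed
    with le show ?thesis by simp
  qed
  with assms(6) show ?thesis by (simp add: strict_chain_def)
qed

lemma noetherian_chain_eventually_const:
  assumes "noetherian A r" and "trans r" and "antisym r"
    and "\<forall>n. t n \<in> A" and step: "\<forall>n. (t n, t (Suc n)) \<in> r"
  obtains N where "\<forall>n\<ge>N. t n = t N"
proof -
  define S where "S = {n. t n \<noteq> t (Suc n)}"
  have "finite S"
  proof (rule ccontr)
    assume "infinite S"
    then have "strict_chain A r (t \<circ> enumerate S)"
      using assms enumerate_in_set[of S] strict_mono_enumerate[of S]
      by (intro strict_chain_subseq) (auto simp: S_def)
    with \<open>noetherian A r\<close> show False by (rule noetherianD)
  qed
  then obtain N where N: "\<forall>n\<in>S. n < N"
    by (metis finite_nat_set_iff_bounded)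
  have "t n = t N" if "N \<le> n" for n
    using that
  proof (induction n rule: dec_induct)
    case (step n)
    then have "n \<notin> S" using N by auto
    with step.IH show ?case by (simp add: S_def)
  qed simp
  then show thesis using that by blast
qed

lemma noetherian_finite_colouring:
  assumes "finite L" and "f \<in> A \<rightarrow> L"
    and classes: "\<forall>\<xi>\<in>L. noetherian {x \<in> A. f x = \<xi>} r"
    and "trans r" and "antisym r"
  shows "noetherian A r"
proof (rule noetherianI)
  fix s assume "strict_chain A r s"
  then have sA: "\<forall>n. s n \<in> A"
    and step: "\<forall>n. (s n, s (Suc n)) \<in> r" and strict_step: "\<forall>n. s n \<noteq> s (Suc n)"
    by (simp_all add: strict_chain_def)
  have "range (f \<circ> s) \<subseteq> L" using assms(2) sA by auto
  then have "finite (range (f \<circ> s))" using assms(1) by (rule finite_subset)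
  then obtain \<xi> where \<xi>: "\<xi> \<in> range (f \<circ> s)" and inf: "infinite ((f \<circ> s) -` {\<xi>})"
    using inf_img_fin_dom[of "f \<circ> s" UNIV] by auto
  define S where "S = (f \<circ> s) -` {\<xi>}"
  with inf have "infinite S" by simp
  have "\<xi> \<in> L" using \<xi> \<open>range (f \<circ> s) \<subseteq> L\<close> by blast
  have "\<forall>k. s (enumerate S k) \<in> {x \<in> A. f x = \<xi>}"
    using enumerate_in_set[OF \<open>infinite S\<close>] sA by (simp add: S_def)
  then have "strict_chain {x \<in> A. f x = \<xi>} r (s \<circ> enumerate S)"
    using strict_chain_subseq[OF assms(4,5) step strict_mono_enumerate[OF \<open>infinite S\<close>]] strict_step
    by blast
  with classes \<open>\<xi> \<in> L\<close> show False by (blast dest: noetherianD)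
qed

lemma noetherian_imp_lambda_noetherian:
  assumes "L \<noteq> {}" and "noetherian A r"
  shows "lambda_noetherian L A r"
proof -
  obtain \<xi>\<^sub>0 where "\<xi>\<^sub>0 \<in> L" using assms(1) by blast
  then show ?thesis
    unfolding lambda_noetherian_def
    using assms(2) by (intro exI[of _ "\<lambda>_. \<xi>\<^sub>0"]) (auto simp: noetherian_def)
qed

lemma lambda_noetherian_inj:
  assumes "inj_on k L'" and "k ` L' \<subseteq> L" and "lambda_noetherian L' A r"
  shows "lambda_noetherian L A r"
proof -
  obtain f where f: "f \<in> A \<rightarrow> L'" and classes: "\<forall>\<xi>\<in>L'. noetherian {x \<in> A. f x = \<xi>} r"
    using assms(3) unfolding lambda_noetherian_def by blast
  have "noetherian {x \<in> A. k (f x) = \<xi>} r" for \<xi>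
  proof (cases "\<xi> \<in> k ` L'")
    case True
    then obtain p where "p \<in> L'" "\<xi> = k p" by blast
    then have "{x \<in> A. k (f x) = \<xi>} = {x \<in> A. f x = p}"
      using f assms(1) by (auto dest: inj_onD)
    with classes \<open>p \<in> L'\<close> show ?thesis by simp
  next
    case False
    then have "{x \<in> A. k (f x) = \<xi>} = {}" using f by blast
    then show ?thesis by (simp only: noetherian_empty)
  qed
  moreover have "k \<circ> f \<in> A \<rightarrow> L" using f assms(2) by (auto simp: Pi_iff image_subset_iff)
  ultimately show ?thesis unfolding lambda_noetherian_def by auto
qed

lemma lambda_noetherian_Times_self:
  assumes "trans r" and "antisym r" and "lambda_noetherian (L \<times> L) A r"
  shows "lambda_noetherian L A r"
proof (cases "finite L \<and> L \<noteq> {}")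
  case True
  obtain f where "f \<in> A \<rightarrow> L \<times> L" "\<forall>p\<in>L \<times> L. noetherian {x \<in> A. f x = p} r"
    using assms(3) unfolding lambda_noetherian_def by blast
  then have "noetherian A r"
    using True assms(1,2) by (intro noetherian_finite_colouring) auto
  with True show ?thesis by (blast intro: noetherian_imp_lambda_noetherian)
next
  case False
  obtain k where "bij_betw k (L \<times> L) L"
  proof (cases "L = {}")
    case False
    with \<open>\<not> (finite L \<and> L \<noteq> {})\<close> have "infinite L" by blast
    then show ?thesis
      using card_of_ordIso card_of_Times_same_infinite that by blast
  qed (rule that, simp add: bij_betw_def)
  then show ?thesis
    using assms(3) by (intro lambda_noetherian_inj[of k "L \<times> L"]) (auto simp: bij_betw_def)
qed

lemma noetherian_colour_class_of_fibres:
  assumes "trans rQ" and "antisym rQ"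
    and "\<phi> \<in> P \<rightarrow> Q"
    and mono: "\<forall>x\<in>P. \<forall>y\<in>P. (x, y) \<in> rP \<longrightarrow> (\<phi> x, \<phi> y) \<in> rQ"
    and base: "noetherian {y \<in> Q. g y = a} rQ"
    and fibres: "\<forall>q\<in>Q. noetherian {x \<in> {x \<in> P. \<phi> x = q}. h q x = b} rP"
  shows "noetherian {x \<in> P. g (\<phi> x) = a \<and> h (\<phi> x) x = b} rP"
proof (rule noetherianI)
  fix s assume "strict_chain {x \<in> P. g (\<phi> x) = a \<and> h (\<phi> x) x = b} rP s"
  then have sP: "\<forall>n. s n \<in> P \<and> g (\<phi> (s n)) = a \<and> h (\<phi> (s n)) (s n) = b"
    and step: "\<forall>n. (s n, s (Suc n)) \<in> rP \<and> s n \<noteq> s (Suc n)"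
    by (simp_all add: strict_chain_def)
  have "\<forall>n. \<phi> (s n) \<in> {y \<in> Q. g y = a}"
    using sP funcset_mem[OF assms(3)] by simp
  moreover have "\<forall>n. (\<phi> (s n), \<phi> (s (Suc n))) \<in> rQ"
    using mono sP step by blast
  ultimately obtain N where N: "\<forall>n\<ge>N. \<phi> (s n) = \<phi> (s N)"
    by (rule noetherian_chain_eventually_const[OF base assms(1,2)])
  define q where "q = \<phi> (s N)"
  have "q \<in> Q" using sP funcset_mem[OF assms(3)] by (simp add: q_def)
  have "\<phi> (s (N + k)) = q" for k
    using N le_add1 unfolding q_def by blast
  then have "s (N + k) \<in> {x \<in> {x \<in> P. \<phi> x = q}. h q x = b}" for k
    using sP[rule_format, of "N + k"] by simp
  then have "strict_chain {x \<in> {x \<in> P. \<phi> x = q}. h q x = b} rP (\<lambda>k. s (N + k))"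
    using step by (simp add: strict_chain_def)
  with fibres \<open>q \<in> Q\<close> show False by (meson noetherianD)
qed

lemma lambda_noetherian_Times_of_fibres:
  assumes "trans rQ" and "antisym rQ"
    and "\<phi> \<in> P \<rightarrow> Q"
    and "\<forall>x\<in>P. \<forall>y\<in>P. (x, y) \<in> rP \<longrightarrow> (\<phi> x, \<phi> y) \<in> rQ"
    and "lambda_noetherian L Q rQ"
    and "\<forall>q\<in>Q. lambda_noetherian L {x \<in> P. \<phi> x = q} rP"
  shows "lambda_noetherian (L \<times> L) P rP"
proof -
  obtain g where g: "g \<in> Q \<rightarrow> L" "\<forall>\<xi>\<in>L. noetherian {y \<in> Q. g y = \<xi>} rQ"
    using assms(5) unfolding lambda_noetherian_def by blast
  obtain h where "\<forall>q\<in>Q. h q \<in> {x \<in> P. \<phi> x = q} \<rightarrow> L \<and>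
      (\<forall>\<xi>\<in>L. noetherian {x \<in> {x \<in> P. \<phi> x = q}. h q x = \<xi>} rP)"
    using bchoice[OF assms(6)[unfolded lambda_noetherian_def]] by (elim exE)
  then have h: "\<And>q. q \<in> Q \<Longrightarrow> h q \<in> {x \<in> P. \<phi> x = q} \<rightarrow> L"
    "\<And>q. q \<in> Q \<Longrightarrow> \<forall>\<xi>\<in>L. noetherian {x \<in> {x \<in> P. \<phi> x = q}. h q x = \<xi>} rP"
    by simp_all
  define c where "c x = (g (\<phi> x), h (\<phi> x) x)" for x
  have "c \<in> P \<rightarrow> L \<times> L"
  proof
    fix x assume "x \<in> P"
    then have "\<phi> x \<in> Q" using assms(3) by blast
    with \<open>x \<in> P\<close> show "c x \<in> L \<times> L"
      using funcset_mem[OF g(1)] funcset_mem[OF h(1)] by (simp add: c_def)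
  qed
  moreover have "noetherian {x \<in> P. c x = p} rP" if p: "p \<in> L \<times> L" for p
  proof -
    obtain a b where "p = (a, b)" "a \<in> L" "b \<in> L" using p by blast
    then show ?thesis
      using noetherian_colour_class_of_fibres[OF assms(1-4), of g a h b] g(2) h(2)
      by (simp add: c_def)
  qed
  ultimately show ?thesis
    unfolding lambda_noetherian_def by blast
qed

theorem lemma1:
  fixes L :: "'c set" and P :: "'a set" and rP :: "'a rel"
    and Q :: "'b set" and rQ :: "'b rel" and \<phi> :: "'a \<Rightarrow> 'b"
  assumes "partial_order_on P rP" and "partial_order_on Q rQ"
    and "\<phi> \<in> P \<rightarrow> Q"
    and "\<forall>x\<in>P. \<forall>y\<in>P. (x, y) \<in> rP \<longrightarrow> (\<phi> x, \<phi> y) \<in> rQ"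
    and "lambda_noetherian L Q rQ"
    and "\<forall>q\<in>Q. lambda_noetherian L {x \<in> P. \<phi> x = q} rP"
  shows "lambda_noetherian L P rP"
proof -
  have "trans rP" "antisym rP" "trans rQ" "antisym rQ"
    using assms(1,2) by (simp_all add: partial_order_on_def preorder_on_def)
  have "lambda_noetherian (L \<times> L) P rP"
    using \<open>trans rQ\<close> \<open>antisym rQ\<close> assms(3-6) by (rule lambda_noetherian_Times_of_fibres)
  with \<open>trans rP\<close> \<open>antisym rP\<close> show ?thesis
    by (rule lambda_noetherian_Times_self)
qed

end
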